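(* Let $\mu>0$ and $b>0$. Let $Z_1,Z_2,\dots$ be independent Normal random variables with mean $\mu$ and variance $1$, let $S_m=\sum_{i=1}^m Z_i$, and let $\tau=\min\{m: S_m<-b \text{ or } S_m>b\}$. Let $\Phi$ be the standard Normal distribution function and $R(a)=\frac{\Phi(a)}{1-\Phi(a)}$. Then $$\frac{e^{2\mu b}-1}{e^{2\mu b}-R(-\mu)e^{-2\mu b}}<\mathbb{P}(S_\tau>b)<\frac{e^{2\mu b}R(\mu)-1}{e^{2\mu b}R(\mu)-e^{-2\mu b}}.$$ *)

theory Defs
  imports "HOL-Probability.Probability"
begin

definition std_normal_cdf :: "real \<Rightarrow> real" where
  "std_normal_cdf a = cdf (density lborel std_normal_density) a"

definition R_ratio :: "real \<Rightarrow> real" where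
  "R_ratio a = std_normal_cdf a / (1 - std_normal_cdf a)"

text \<open>Partial sums S_m = Z_1 + ... + Z_m; here Z_i is represented as Z (i-1),
  i.e. the sequence Z is indexed from 0, and S m = sum of the first m terms.\<close>
definition partial_sum :: "(nat \<Rightarrow> 'a \<Rightarrow> real) \<Rightarrow> nat \<Rightarrow> 'a \<Rightarrow> real" where
  "partial_sum Z m \<omega> = (\<Sum>i<m. Z i \<omega>)"

text \<open>Exit time tau = min {m >= 1. S_m < -b or S_m > b} (meaningful when the set is nonempty).\<close>
definition exit_time :: "(nat \<Rightarrow> 'a \<Rightarrow> real) \<Rightarrow> real \<Rightarrow> 'a \<Rightarrow> nat" where
  "exit_time Z b \<omega> = (LEAST m. m \<ge> 1 \<and> (partial_sum Z m \<omega> < -b \<or> partial_sum Z m \<omega> > b))"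

definition upper_exit_event :: "'a measure \<Rightarrow> (nat \<Rightarrow> 'a \<Rightarrow> real) \<Rightarrow> real \<Rightarrow> 'a set" where
  "upper_exit_event M Z b = {\<omega> \<in> space M.
      (\<exists>m\<ge>1. partial_sum Z m \<omega> < -b \<or> partial_sum Z m \<omega> > b) \<and>
      partial_sum Z (exit_time Z b \<omega>) \<omega> > b}"

end

theory Submission
  imports Defs
begin

(*
  Let tau be the exit time and phi the N(mu,1) density. Since exp(-2 mu Z) has mean 1,
  exp(-2 mu S_n) is a martingale and Wald's identity gives E exp(-2 mu S_tau) = 1, next to
  P(S_tau > b) + P(S_tau < -b) = 1. Both identities are sums over the exit step, and the
  bounds come from comparing their summands. Given the last position x in [-b, b], the
  overshoot over a barrier at distance c has density proportional to phi(c + t) on t > 0, so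
  the conditional mean of exp(-2 mu S_tau) on an upward exit is e^(-2 mu b) L(c + 2 mu) / L(c),
  where L(a) is the Laplace transform of phi restricted to (0, oo); a downward exit gives
  e^(2 mu b) L(c) / L(c + 2 mu). By Chebyshev's integral inequality L is log-convex, so
  L(c + 2 mu) / L(c) lies between L(2 mu) / L(0) = R(-mu) and 1, and strictly below 1 because
  L is strictly decreasing. Solving the two identities for P(S_tau > b) gives the bounds.
*)

lemma enn2real_strict_mono: "a < b \<Longrightarrow> b < \<top> \<Longrightarrow> enn2real a < enn2real b"
  by (cases a; cases b) (auto simp: ennreal_less_iff)

lemma enn2real_le_mult:
  assumes "X \<le> ennreal c * Y" "Y < \<top>" "0 \<le> c"
  shows "enn2real X \<le> c * enn2real Y"
proof -
  have "enn2real X \<le> enn2real (ennreal c * Y)"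
    using assms by (intro enn2real_mono) (auto simp: ennreal_mult_less_top)
  then show ?thesis
    using assms by (simp add: enn2real_mult)
qed

lemma mult_le_enn2real:
  assumes "ennreal c * Y \<le> X" "X < \<top>" "0 \<le> c"
  shows "c * enn2real Y \<le> enn2real X"
proof -
  have "enn2real (ennreal c * Y) \<le> enn2real X"
    using assms by (intro enn2real_mono)
  then show ?thesis
    using assms by (simp add: enn2real_mult)
qed

lemma enn2real_less_mult:
  assumes "X < ennreal c * Y" "Y < \<top>" "0 \<le> c"
  shows "enn2real X < c * enn2real Y"
proof -
  have "enn2real X < enn2real (ennreal c * Y)"
    using assms by (intro enn2real_strict_mono) (auto simp: ennreal_mult_less_top)
  then show ?thesis
    using assms by (simp add: enn2real_mult)
qed

lemma mult_less_enn2real: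
  assumes "ennreal c * Y < X" "X < \<top>" "0 \<le> c"
  shows "c * enn2real Y < enn2real X"
proof -
  have "enn2real (ennreal c * Y) < enn2real X"
    using assms by (intro enn2real_strict_mono)
  then show ?thesis
    using assms by (simp add: enn2real_mult)
qed

lemma suminf_strict_mono:
  fixes f g :: "nat \<Rightarrow> real"
  assumes "summable f" "summable g" "\<And>n. f n \<le> g n" "f i < g i"
  shows "suminf f < suminf g"
proof -
  have "0 < (\<Sum>n. g n - f n)"
    using assms by (intro suminf_pos2[where i=i] summable_diff) auto
  then show ?thesis
    using suminf_diff[OF assms(2,1)] by simp
qed

lemma suminf_bounds_from_two_partitions:
  fixes p q A B :: "nat \<Rightarrow> real" and c1 c2 d1 d2 :: real
  assumes pq: "(\<lambda>k. p k + q k) sums 1" and AB: "(\<lambda>k. A k + B k) sums 1"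
    and nonneg: "\<And>k. 0 \<le> p k" "\<And>k. 0 \<le> q k" "\<And>k. 0 \<le> A k" "\<And>k. 0 \<le> B k"
    and A_lower: "\<And>k. c1 * p k \<le> A k" and A_upper: "\<And>k. A k \<le> c2 * p k" "A 0 < c2 * p 0"
    and B_lower: "\<And>k. d1 * q k \<le> B k" "d1 * q 0 < B 0" and B_upper: "\<And>k. B k \<le> d2 * q k"
    and "c1 < d1" "c2 < d2"
  shows "(d1 - 1) / (d1 - c1) < suminf p \<and> suminf p < (d2 - 1) / (d2 - c2)"
proof -
  have summable: "summable p" "summable q" "summable A" "summable B"
    using sums_summable[OF pq] sums_summable[OF AB] nonneg
    by (auto intro: summable_comparison_test[where g="\<lambda>k. p k + q k"]
                    summable_comparison_test[where g="\<lambda>k. A k + B k"])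
  define P Q where "P = suminf p" and "Q = suminf q"
  have "P + Q = 1" "suminf A + suminf B = 1"
    using pq AB summable by (simp_all add: P_def Q_def sums_iff suminf_add)
  moreover have "c1 * P \<le> suminf A" "suminf A < c2 * P"
    using A_lower A_upper summable by (simp_all add: P_def suminf_le suminf_strict_mono flip: suminf_mult)
  moreover have "d1 * Q < suminf B" "suminf B \<le> d2 * Q"
    using B_lower B_upper summable by (simp_all add: Q_def suminf_le suminf_strict_mono flip: suminf_mult)
  moreover have "Q = 1 - P"
    using \<open>P + Q = 1\<close> by simp
  ultimately have "d1 - 1 < P * (d1 - c1)" "P * (d2 - c2) < d2 - 1"
    by (simp_all add: algebra_simps)
  with \<open>c1 < d1\<close> \<open>c2 < d2\<close> show ?thesis
    by (simp add: P_def divide_less_eq less_divide_eq)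
qed

lemma nn_integral_pos_if_pos_on_interval:
  fixes f :: "real \<Rightarrow> ennreal"
  assumes [measurable]: "f \<in> borel_measurable borel" and "a < b"
    and pos: "\<And>x. a < x \<Longrightarrow> x < b \<Longrightarrow> 0 < f x"
  shows "0 < (\<integral>\<^sup>+x. f x \<partial>lborel)"
proof (rule ccontr)
  assume "\<not> 0 < (\<integral>\<^sup>+x. f x \<partial>lborel)"
  then have "AE x in lborel. f x = 0"
    by (simp add: nn_integral_0_iff_AE)
  then have "AE x in lborel. x \<notin> {a<..<b}"
    by eventually_elim (use pos in force)
  then have "emeasure lborel {a<..<b} = 0"
    by (subst (asm) AE_iff_measurable[of "{a<..<b}"]) auto
  with \<open>a < b\<close> show False
    by simp
qed

lemma (in prob_space) nn_integral_indep_var: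
  assumes indep: "indep_var N Y K V"
    and G[measurable]: "case_prod G \<in> borel_measurable (N \<Otimes>\<^sub>M K)"
  shows "(\<integral>\<^sup>+\<omega>. G (Y \<omega>) (V \<omega>) \<partial>M) = (\<integral>\<^sup>+\<omega>. \<integral>\<^sup>+\<omega>'. G (Y \<omega>) (V \<omega>') \<partial>M \<partial>M)"
proof -
  have [measurable]: "Y \<in> measurable M N" "V \<in> measurable M K"
    using indep by (auto dest: indep_var_rv1 indep_var_rv2)
  interpret DV: prob_space "distr M K V"
    by (rule prob_space_distr) simp
  have "(\<integral>\<^sup>+\<omega>. G (Y \<omega>) (V \<omega>) \<partial>M) = (\<integral>\<^sup>+p. case_prod G p \<partial>distr M (N \<Otimes>\<^sub>M K) (\<lambda>\<omega>. (Y \<omega>, V \<omega>)))"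
    by (simp add: nn_integral_distr)
  also have "\<dots> = (\<integral>\<^sup>+p. case_prod G p \<partial>(distr M N Y \<Otimes>\<^sub>M distr M K V))"
    using indep by (simp add: indep_var_distribution_eq)
  also have "\<dots> = (\<integral>\<^sup>+y. \<integral>\<^sup>+v. G y v \<partial>distr M K V \<partial>distr M N Y)"
    by (subst DV.nn_integral_fst[symmetric]) simp_all
  also have "\<dots> = (\<integral>\<^sup>+y. \<integral>\<^sup>+\<omega>'. G y (V \<omega>') \<partial>M \<partial>distr M N Y)"
    using measurable_Pair2[OF G] by (intro nn_integral_cong) (simp add: nn_integral_distr)
  also have "\<dots> = (\<integral>\<^sup>+\<omega>. \<integral>\<^sup>+\<omega>'. G (Y \<omega>) (V \<omega>') \<partial>M \<partial>M)"
    by (simp add: nn_integral_distr)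
  finally show ?thesis .
qed

lemma measurable_component_PiM:
  "(\<lambda>v. v i) \<in> borel_measurable (PiM I (\<lambda>_. borel :: real measure))"
proof (cases "i \<in> I")
  case False
  then have "(\<lambda>v. v i) \<in> borel_measurable (PiM I (\<lambda>_. borel :: real measure)) \<longleftrightarrow>
      (\<lambda>v. undefined :: real) \<in> borel_measurable (PiM I (\<lambda>_. borel :: real measure))"
    by (intro measurable_cong) (auto simp: space_PiM PiE_def extensional_def)
  then show ?thesis
    by simp
qed (rule measurable_component_singleton)

section \<open>Log-convexity of Laplace transforms\<close>

lemma exp_chebyshev:
  fixes a c s t :: real
  assumes "0 \<le> c" "0 \<le> a"
  shows "exp (- c * s) * exp (- a * t) + exp (- a * s) * exp (- c * t)
           \<le> exp (- (c + a) * t) + exp (- (c + a) * s)"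
proof -
  have "0 \<le> (exp (- c * s) - exp (- c * t)) * (exp (- a * s) - exp (- a * t))"
    using assms by (cases "s \<le> t") (auto intro!: mult_nonneg_nonneg mult_nonpos_nonpos simp: mult_left_mono)
  then show ?thesis by (simp add: algebra_simps flip: exp_add)
qed

lemma laplace_transform_log_convex:
  fixes w :: "real \<Rightarrow> real"
  assumes [measurable]: "w \<in> borel_measurable borel" and w_nonneg: "\<And>t. 0 \<le> w t"
    and "0 \<le> c" "0 \<le> a"
  defines "L \<equiv> \<lambda>x. \<integral>\<^sup>+t. ennreal (w t * exp (- x * t)) \<partial>lborel"
  shows "L c * L a \<le> L 0 * L (c + a)"
proof -
  define u where "u x y s t = ennreal (w s * w t * (exp (- x * s) * exp (- y * t)))" for x y s t
  have [measurable]: "u x y s \<in> borel_measurable lborel" for x y s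
    unfolding u_def by measurable
  have [measurable]: "(\<lambda>s. \<integral>\<^sup>+t. u x y s t \<partial>lborel) \<in> borel_measurable lborel" for x y
    unfolding u_def by measurable
  have prod: "L x * L y = (\<integral>\<^sup>+s. \<integral>\<^sup>+t. u x y s t \<partial>lborel \<partial>lborel)" for x y
  proof -
    have "L x * L y = (\<integral>\<^sup>+s. \<integral>\<^sup>+t. ennreal (w s * exp (- x * s)) * ennreal (w t * exp (- y * t)) \<partial>lborel \<partial>lborel)"
      unfolding L_def by (simp add: nn_integral_multc nn_integral_cmult)
    also have "\<dots> = (\<integral>\<^sup>+s. \<integral>\<^sup>+t. u x y s t \<partial>lborel \<partial>lborel)"
      unfolding u_def using w_nonneg by (simp add: ac_simps flip: ennreal_mult')
    finally show ?thesis .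
  qed
  have "2 * (L c * L a) = L c * L a + L a * L c"
    by (simp add: mult_2 mult.commute)
  also have "\<dots> = (\<integral>\<^sup>+s. \<integral>\<^sup>+t. u c a s t + u a c s t \<partial>lborel \<partial>lborel)"
    unfolding prod by (simp add: nn_integral_add)
  also have "\<dots> \<le> (\<integral>\<^sup>+s. \<integral>\<^sup>+t. u 0 (c + a) s t + u (c + a) 0 s t \<partial>lborel \<partial>lborel)"
  proof (intro nn_integral_mono)
    fix s t
    have "w s * w t * (exp (- c * s) * exp (- a * t) + exp (- a * s) * exp (- c * t))
        \<le> w s * w t * (exp (- (c + a) * t) + exp (- (c + a) * s))"
      using exp_chebyshev[OF assms(3,4)] w_nonneg by (simp add: mult_left_mono)
    then show "u c a s t + u a c s t \<le> u 0 (c + a) s t + u (c + a) 0 s t"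
      using w_nonneg by (simp add: u_def distrib_left flip: ennreal_plus)
  qed
  also have "\<dots> = L 0 * L (c + a) + L (c + a) * L 0"
    unfolding prod by (simp add: nn_integral_add)
  also have "\<dots> = 2 * (L 0 * L (c + a))"
    by (simp add: mult_2 mult.commute)
  finally show ?thesis
    by (simp add: ennreal_mult_le_mult_iff)
qed

section \<open>The normal density\<close>

lemma nn_integral_normal_density:
  "0 < \<sigma> \<Longrightarrow> (\<integral>\<^sup>+x. ennreal (normal_density m \<sigma> x) \<partial>lborel) = 1"
  using prob_space.emeasure_space_1[OF prob_space_normal_density, of \<sigma> m]
  by (simp add: emeasure_density)

lemma normal_density_shift:
  "normal_density m 1 (c + t) = exp (c * m - c\<^sup>2 / 2) * exp (- c * t) * normal_density m 1 t"
  unfolding normal_density_def by (simp add: power2_eq_square flip: exp_add) (simp add: field_simps; algebra)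

lemma normal_density_reflect:
  "normal_density m 1 (- d - t) = exp (- (d + 2 * m) * d / 2) * exp (- (d + 2 * m) * t) * normal_density m 1 t"
  unfolding normal_density_def by (simp add: power2_eq_square flip: exp_add) (simp add: field_simps; algebra)

lemma normal_density_exp_tilt:
  "exp (- a * x) * normal_density m 1 x = exp (a\<^sup>2 / 2 - a * m) * normal_density (m - a) 1 x"
  unfolding normal_density_def by (simp add: power2_eq_square flip: exp_add) (simp add: field_simps; algebra)

lemma nn_integral_std_normal_density_upper:
  "(\<integral>\<^sup>+x. ennreal (indicator {a<..} x * std_normal_density x) \<partial>lborel) = ennreal (1 - std_normal_cdf a)"
proof -
  interpret D: prob_space "density lborel std_normal_density"
    by (rule prob_space_normal_density) simp
  have "(\<integral>\<^sup>+x. ennreal (indicator {a<..} x * std_normal_density x) \<partial>lborel)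
      = emeasure (density lborel std_normal_density) {a<..}"
    by (subst emeasure_density) (auto intro!: nn_integral_cong split: split_indicator)
  also have "\<dots> = ennreal (1 - std_normal_cdf a)"
    using D.prob_compl[of "{..a}"]
    by (simp add: D.emeasure_eq_measure std_normal_cdf_def cdf_def2 Compl_eq_Diff_UNIV[symmetric]
        flip: Compl_atMost)
  finally show ?thesis .
qed

lemma std_normal_cdf_nonneg: "0 \<le> std_normal_cdf a"
  by (simp add: std_normal_cdf_def cdf_def2)

lemma std_normal_cdf_le_1: "std_normal_cdf a \<le> 1"
proof -
  interpret D: prob_space "density lborel std_normal_density"
    by (rule prob_space_normal_density) simp
  show ?thesis
    by (simp add: std_normal_cdf_def cdf_def2)
qed

lemma std_normal_cdf_minus: "std_normal_cdf (- a) = 1 - std_normal_cdf a"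
proof -
  interpret D: prob_space "density lborel std_normal_density"
    by (rule prob_space_normal_density) simp
  have "ennreal (std_normal_cdf (- a)) = emeasure (density lborel std_normal_density) {..- a}"
    by (simp add: std_normal_cdf_def cdf_def2 D.emeasure_eq_measure)
  also have "\<dots> = (\<integral>\<^sup>+x. ennreal (indicator {..- a} x * std_normal_density x) \<partial>lborel)"
    by (subst emeasure_density) (auto intro!: nn_integral_cong split: split_indicator)
  also have "\<dots> = (\<integral>\<^sup>+x. ennreal (indicator {..- a} (0 + (- 1) * x) * std_normal_density (0 + (- 1) * x)) \<partial>lborel)"
    by (subst nn_integral_real_affine[where c="- 1" and t=0]) auto
  also have "\<dots> = (\<integral>\<^sup>+x. ennreal (indicator {a<..} x * std_normal_density x) \<partial>lborel)"
    using AE_lborel_singleton[of a]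
    by (intro nn_integral_cong_AE) (auto split: split_indicator simp: std_normal_density_def)
  finally show ?thesis
    by (simp add: nn_integral_std_normal_density_upper ennreal_inj std_normal_cdf_def cdf_def2 D.prob_le_1)
qed

lemma nn_integral_normal_density_upper:
  "(\<integral>\<^sup>+x. ennreal (indicator {c<..} x * normal_density m 1 x) \<partial>lborel) = ennreal (1 - std_normal_cdf (c - m))"
proof -
  have "(\<integral>\<^sup>+x. ennreal (indicator {c<..} x * normal_density m 1 x) \<partial>lborel)
      = (\<integral>\<^sup>+x. ennreal (indicator {c<..} (m + 1 * x) * normal_density m 1 (m + 1 * x)) \<partial>lborel)"
    by (subst nn_integral_real_affine[where c=1 and t=m]) auto
  also have "\<dots> = (\<integral>\<^sup>+x. ennreal (indicator {c - m<..} x * std_normal_density x) \<partial>lborel)"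
    by (intro nn_integral_cong) (auto simp: normal_density_def split: split_indicator)
  finally show ?thesis
    by (simp add: nn_integral_std_normal_density_upper)
qed

section \<open>One step of the walk between the barriers\<close>

locale drift_barriers =
  fixes \<mu> b :: real
  assumes drift_pos: "0 < \<mu>" and barrier_pos: "0 < b"
begin

abbreviation \<phi> :: "real \<Rightarrow> real" where "\<phi> \<equiv> normal_density \<mu> 1"

definition L :: "real \<Rightarrow> ennreal" where
  "L a = (\<integral>\<^sup>+t. ennreal (indicator {0<..} t * \<phi> t * exp (- a * t)) \<partial>lborel)"

definition l :: "real \<Rightarrow> real" where
  "l a = enn2real (L a)"

lemma l_nonneg: "0 \<le> l a"
  by (simp add: l_def)

lemma L_le_1:
  assumes "0 \<le> a"
  shows "L a \<le> 1"
proof -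
  have "L a \<le> (\<integral>\<^sup>+t. ennreal (\<phi> t) \<partial>lborel)"
    unfolding L_def using assms
    by (intro nn_integral_mono) (auto simp: mult_left_le split: split_indicator)
  then show ?thesis
    by (simp add: nn_integral_normal_density)
qed

lemma L_finite: "0 \<le> a \<Longrightarrow> L a < \<top>"
  using L_le_1 ennreal_one_less_top by (rule le_less_trans)

lemma L_eq_ennreal: "0 \<le> a \<Longrightarrow> L a = ennreal (l a)"
  using L_finite by (simp add: l_def)

lemma l_pos: "0 \<le> a \<Longrightarrow> 0 < l a"
proof -
  assume "0 \<le> a"
  have "0 < L a"
    unfolding L_def by (rule nn_integral_pos_if_pos_on_interval[of _ 0 1]) (auto simp: normal_density_pos)
  then show ?thesis
    using L_eq_ennreal[OF \<open>0 \<le> a\<close>] by simp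
qed

lemma l_strict_antimono:
  assumes "0 \<le> a" "a < a'"
  shows "l a' < l a"
proof -
  define g where "g t = indicator {0<..} t * \<phi> t * (exp (- a * t) - exp (- a' * t))" for t
  have [measurable]: "g \<in> borel_measurable borel"
    unfolding g_def by measurable
  have g_pos: "0 < g t" if "0 < t" for t
    using that assms by (simp add: g_def normal_density_pos)
  have g_nonneg: "0 \<le> g t" for t
    using g_pos[of t] by (cases "0 < t") (auto simp: g_def)
  have "L a = (\<integral>\<^sup>+t. ennreal (indicator {0<..} t * \<phi> t * exp (- a' * t)) + ennreal (g t) \<partial>lborel)"
    unfolding L_def using g_nonneg
    by (intro nn_integral_cong) (simp add: g_def algebra_simps flip: ennreal_plus)
  also have "\<dots> = L a' + (\<integral>\<^sup>+t. ennreal (g t) \<partial>lborel)"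
    unfolding L_def by (rule nn_integral_add) (auto simp: g_def)
  finally have split: "L a = L a' + (\<integral>\<^sup>+t. ennreal (g t) \<partial>lborel)" .
  have "0 < (\<integral>\<^sup>+t. ennreal (g t) \<partial>lborel)"
    by (rule nn_integral_pos_if_pos_on_interval[of _ 0 1]) (auto simp: g_pos)
  then have "L a' < L a"
    using L_eq_ennreal[of a'] assms unfolding split by (simp add: ennreal_add_left_cancel_less[of _ 0, simplified])
  then show ?thesis
    using assms L_finite[of a] unfolding l_def by (intro enn2real_strict_mono)
qed

lemma l_log_convex: "0 \<le> c \<Longrightarrow> 0 \<le> a \<Longrightarrow> l c * l a \<le> l 0 * l (c + a)"
proof -
  assume "0 \<le> c" "0 \<le> a"
  have "L c * L a \<le> L 0 * L (c + a)"
    unfolding L_def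
    by (rule laplace_transform_log_convex[where w="\<lambda>t. indicator {0<..} t * \<phi> t"])
       (use \<open>0 \<le> c\<close> \<open>0 \<le> a\<close> in auto)
  with \<open>0 \<le> c\<close> \<open>0 \<le> a\<close> show ?thesis
    by (simp add: L_eq_ennreal l_pos less_imp_le flip: ennreal_mult)
qed

lemma l_0: "l 0 = std_normal_cdf \<mu>"
proof -
  have "L 0 = ennreal (1 - std_normal_cdf (- \<mu>))"
    using nn_integral_normal_density_upper[of 0 \<mu>] by (simp add: L_def)
  then show ?thesis
    by (simp add: l_def std_normal_cdf_minus std_normal_cdf_nonneg)
qed

lemma l_double_drift: "l (2 * \<mu>) = 1 - std_normal_cdf \<mu>"
proof -
  have tilt: "\<phi> t * exp (- (2 * \<mu>) * t) = normal_density (- \<mu>) 1 t" for t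
    using normal_density_exp_tilt[of "2 * \<mu>" t \<mu>] by (simp add: power2_eq_square mult.commute)
  have "L (2 * \<mu>) = (\<integral>\<^sup>+t. ennreal (indicator {0<..} t * normal_density (- \<mu>) 1 t) \<partial>lborel)"
    unfolding L_def by (simp only: mult.assoc tilt)
  then show ?thesis
    by (simp add: l_def nn_integral_normal_density_upper std_normal_cdf_le_1)
qed

definition \<rho> :: real where
  "\<rho> = l (2 * \<mu>) / l 0"

lemma \<rho>_pos: "0 < \<rho>"
  using l_pos[of 0] l_pos[of "2 * \<mu>"] drift_pos by (simp add: \<rho>_def)

lemma \<rho>_less_1: "\<rho> < 1"
  using l_pos[of 0] l_strict_antimono[of 0 "2 * \<mu>"] drift_pos by (simp add: \<rho>_def)

lemma R_ratio_minus_drift: "R_ratio (- \<mu>) = \<rho>"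
  by (simp add: R_ratio_def \<rho>_def l_0 l_double_drift std_normal_cdf_minus)

lemma R_ratio_drift: "R_ratio \<mu> = 1 / \<rho>"
  by (simp add: R_ratio_def \<rho>_def l_0 l_double_drift)

lemma l_shift_ratio: "0 \<le> c \<Longrightarrow> \<rho> * l c \<le> l (c + 2 * \<mu>)"
  using l_log_convex[of c "2 * \<mu>"] l_pos[of 0] drift_pos
  by (simp add: \<rho>_def field_simps)

(* a = 0 gives the probability of landing in A after one step from x, a = 2 mu the Wald weight. *)
definition step_moment :: "real set \<Rightarrow> real \<Rightarrow> real \<Rightarrow> ennreal" where
  "step_moment A a x = (\<integral>\<^sup>+z. ennreal (\<phi> z * (indicator A (x + z) * exp (- a * (x + z)))) \<partial>lborel)"

lemma borel_measurable_step_moment[measurable]: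
  assumes [measurable]: "A \<in> sets borel"
  shows "step_moment A a \<in> borel_measurable borel"
proof -
  have "(\<lambda>(x, z). ennreal (\<phi> z * (indicator A (x + z) * exp (- a * (x + z)))))
      \<in> borel_measurable (borel \<Otimes>\<^sub>M borel)"
    by measurable
  then have "(\<lambda>(x, z). ennreal (\<phi> z * (indicator A (x + z) * exp (- a * (x + z)))))
      \<in> borel_measurable (borel \<Otimes>\<^sub>M lborel)"
    by (simp cong: measurable_cong_sets)
  then show ?thesis
    unfolding step_moment_def[abs_def] by (rule lborel.borel_measurable_nn_integral)
qed

lemma nn_integral_exp_step:
  "(\<integral>\<^sup>+z. ennreal (\<phi> z * exp (- a * (x + z))) \<partial>lborel) = ennreal (exp (a\<^sup>2 / 2 - a * \<mu>) * exp (- a * x))"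
proof -
  have "(\<integral>\<^sup>+z. ennreal (\<phi> z * exp (- a * (x + z))) \<partial>lborel)
      = (\<integral>\<^sup>+z. ennreal (exp (a\<^sup>2 / 2 - a * \<mu>) * exp (- a * x)) * ennreal (normal_density (\<mu> - a) 1 z) \<partial>lborel)"
  proof (intro nn_integral_cong)
    fix z
    have "\<phi> z * exp (- a * (x + z)) = exp (- a * x) * (exp (- a * z) * \<phi> z)"
      by (simp add: algebra_simps flip: exp_add)
    also have "\<dots> = exp (a\<^sup>2 / 2 - a * \<mu>) * exp (- a * x) * normal_density (\<mu> - a) 1 z"
      using normal_density_exp_tilt[of a z \<mu>] by simp
    finally show "ennreal (\<phi> z * exp (- a * (x + z)))
        = ennreal (exp (a\<^sup>2 / 2 - a * \<mu>) * exp (- a * x)) * ennreal (normal_density (\<mu> - a) 1 z)"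
      by (simp add: ennreal_mult)
  qed
  also have "\<dots> = ennreal (exp (a\<^sup>2 / 2 - a * \<mu>) * exp (- a * x))"
    by (simp add: nn_integral_cmult nn_integral_normal_density)
  finally show ?thesis .
qed

lemma step_moment_le: "step_moment A a x \<le> ennreal (exp (a\<^sup>2 / 2 - a * \<mu>) * exp (- a * x))"
  unfolding step_moment_def nn_integral_exp_step[symmetric]
  by (intro nn_integral_mono ennreal_leI mult_left_mono) (auto split: split_indicator)

lemma step_moment_finite: "step_moment A a x < \<top>"
  using step_moment_le ennreal_less_top by (rule le_less_trans)

lemma step_moment_total:
  "step_moment {b<..} a x + step_moment {..< -b} a x + step_moment {-b..b} a x
     = ennreal (exp (a\<^sup>2 / 2 - a * \<mu>) * exp (- a * x))"
proof -
  have "indicator {b<..} y + indicator {..< -b} y + indicator {-b..b} y = (1 :: real)" for y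
    using barrier_pos by (auto split: split_indicator)
  then have "step_moment {b<..} a x + step_moment {..< -b} a x + step_moment {-b..b} a x
      = (\<integral>\<^sup>+z. ennreal (\<phi> z * exp (- a * (x + z))) \<partial>lborel)"
    unfolding step_moment_def
    by (simp add: nn_integral_add[symmetric] distrib_left[symmetric] distrib_right[symmetric]
        flip: ennreal_plus)
  also have "\<dots> = ennreal (exp (a\<^sup>2 / 2 - a * \<mu>) * exp (- a * x))"
    by (rule nn_integral_exp_step)
  finally show ?thesis .
qed

lemma step_moment_above:
  assumes "0 \<le> a + (b - x)"
  shows "step_moment {b<..} a x = ennreal (exp (- a * b) * exp ((b - x) * \<mu> - (b - x)\<^sup>2 / 2) * l (a + (b - x)))"
proof -
  define c where "c = b - x"
  have "step_moment {b<..} a x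
      = (\<integral>\<^sup>+t. ennreal (\<phi> (c + 1 * t) * (indicator {b<..} (x + (c + 1 * t)) * exp (- a * (x + (c + 1 * t))))) \<partial>lborel)"
    unfolding step_moment_def by (subst nn_integral_real_affine[where c=1 and t=c]) auto
  also have "\<dots> = (\<integral>\<^sup>+t. ennreal (exp (- a * b) * exp (c * \<mu> - c\<^sup>2 / 2))
                      * ennreal (indicator {0<..} t * \<phi> t * exp (- (a + c) * t)) \<partial>lborel)"
  proof (intro nn_integral_cong)
    fix t
    have "x + (c + 1 * t) = b + t"
      by (simp add: c_def)
    moreover have "exp (- c * t) * exp (- a * (b + t)) = exp (- a * b) * exp (- (a + c) * t)"
      by (simp add: algebra_simps flip: exp_add)
    ultimately show "ennreal (\<phi> (c + 1 * t) * (indicator {b<..} (x + (c + 1 * t)) * exp (- a * (x + (c + 1 * t)))))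
        = ennreal (exp (- a * b) * exp (c * \<mu> - c\<^sup>2 / 2))
          * ennreal (indicator {0<..} t * \<phi> t * exp (- (a + c) * t))"
      by (auto simp: normal_density_shift ac_simps split: split_indicator simp flip: ennreal_mult)
  qed
  also have "\<dots> = ennreal (exp (- a * b) * exp (c * \<mu> - c\<^sup>2 / 2)) * L (a + c)"
    unfolding L_def by (rule nn_integral_cmult) measurable
  finally show ?thesis
    using assms by (simp add: c_def L_eq_ennreal l_nonneg ennreal_mult)
qed

lemma step_moment_below:
  assumes "0 \<le> x + b + 2 * \<mu> - a"
  shows "step_moment {..< -b} a x
     = ennreal (exp (a * b) * exp (- (x + b + 2 * \<mu>) * (x + b) / 2) * l (x + b + 2 * \<mu> - a))"
proof -
  define d where "d = x + b"
  have "step_moment {..< -b} a x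
      = (\<integral>\<^sup>+t. ennreal (\<phi> (- d + (- 1) * t) * (indicator {..< -b} (x + (- d + (- 1) * t))
                  * exp (- a * (x + (- d + (- 1) * t))))) \<partial>lborel)"
    unfolding step_moment_def by (subst nn_integral_real_affine[where c="- 1" and t="- d"]) auto
  also have "\<dots> = (\<integral>\<^sup>+t. ennreal (exp (a * b) * exp (- (d + 2 * \<mu>) * d / 2))
                      * ennreal (indicator {0<..} t * \<phi> t * exp (- (d + 2 * \<mu> - a) * t)) \<partial>lborel)"
  proof (intro nn_integral_cong)
    fix t
    have "\<phi> (- d + (- 1) * t) = exp (- (d + 2 * \<mu>) * d / 2) * exp (- (d + 2 * \<mu>) * t) * \<phi> t"
      using normal_density_reflect[of \<mu> d t] by simp
    moreover have "exp (- a * (x + (- d + (- 1) * t))) = exp (a * b) * exp (a * t)"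
      by (simp add: d_def algebra_simps flip: exp_add)
    moreover have "exp (- (d + 2 * \<mu>) * t) * exp (a * t) = exp (- (d + 2 * \<mu> - a) * t)"
      by (simp add: algebra_simps flip: exp_add)
    ultimately show "ennreal (\<phi> (- d + (- 1) * t) * (indicator {..< -b} (x + (- d + (- 1) * t))
                  * exp (- a * (x + (- d + (- 1) * t)))))
        = ennreal (exp (a * b) * exp (- (d + 2 * \<mu>) * d / 2))
          * ennreal (indicator {0<..} t * \<phi> t * exp (- (d + 2 * \<mu> - a) * t))"
      by (auto simp: d_def ac_simps split: split_indicator simp flip: ennreal_mult)
  qed
  also have "\<dots> = ennreal (exp (a * b) * exp (- (d + 2 * \<mu>) * d / 2)) * L (d + 2 * \<mu> - a)"
    unfolding L_def by (rule nn_integral_cmult) measurable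
  finally show ?thesis
    using assms by (simp add: d_def L_eq_ennreal l_nonneg ennreal_mult)
qed

lemma step_moment_above_less:
  assumes "x \<le> b"
  shows "step_moment {b<..} (2 * \<mu>) x < ennreal (exp (- (2 * \<mu>) * b)) * step_moment {b<..} 0 x"
proof -
  have "l (2 * \<mu> + (b - x)) < l (b - x)"
    using assms drift_pos by (intro l_strict_antimono) auto
  then show ?thesis
    using assms drift_pos
    by (simp add: step_moment_above l_nonneg ennreal_mult[symmetric] ennreal_less_iff)
qed

lemma step_moment_above_ge:
  assumes "x \<le> b"
  shows "ennreal (\<rho> * exp (- (2 * \<mu>) * b)) * step_moment {b<..} 0 x \<le> step_moment {b<..} (2 * \<mu>) x"
proof -
  have "\<rho> * l (b - x) \<le> l (2 * \<mu> + (b - x))"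
    using l_shift_ratio[of "b - x"] assms by (simp add: add.commute)
  then show ?thesis
    using assms drift_pos \<rho>_pos
    by (simp add: step_moment_above l_nonneg ennreal_mult[symmetric] ennreal_le_iff mult_left_mono)
qed

lemma step_moment_below_greater:
  assumes "- b \<le> x"
  shows "ennreal (exp ((2 * \<mu>) * b)) * step_moment {..< -b} 0 x < step_moment {..< -b} (2 * \<mu>) x"
proof -
  have "l (x + b + 2 * \<mu>) < l (x + b)"
    using assms drift_pos by (intro l_strict_antimono) auto
  then show ?thesis
    using assms drift_pos
    by (simp add: step_moment_below l_nonneg ennreal_mult[symmetric] ennreal_less_iff)
qed

lemma step_moment_below_le:
  assumes "- b \<le> x"
  shows "step_moment {..< -b} (2 * \<mu>) x \<le> ennreal (exp ((2 * \<mu>) * b) / \<rho>) * step_moment {..< -b} 0 x"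
proof -
  define K where "K = exp ((2 * \<mu>) * b) * exp (- (x + b + 2 * \<mu>) * (x + b) / 2)"
  have "l (x + b) \<le> l (x + b + 2 * \<mu>) / \<rho>"
    using l_shift_ratio[of "x + b"] assms \<rho>_pos by (simp add: field_simps)
  then have "K * l (x + b) \<le> K * (l (x + b + 2 * \<mu>) / \<rho>)"
    by (rule mult_left_mono) (simp add: K_def)
  then show ?thesis
    using assms drift_pos \<rho>_pos
    by (simp add: step_moment_below K_def l_nonneg ennreal_mult[symmetric] ennreal_le_iff ac_simps)
qed

definition \<eta> :: real where
  "\<eta> = enn2real (step_moment {b<..} 0 (- b))"

lemma \<eta>_pos: "0 < \<eta>"
  using l_pos[of "2 * b"] barrier_pos by (simp add: \<eta>_def step_moment_above)

lemma \<eta>_le_1: "\<eta> \<le> 1"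
  unfolding \<eta>_def by (rule enn2real_leI) (use step_moment_le[of "{b<..}" 0 "- b"] in simp_all)

lemma \<eta>_le_step_moment_above:
  assumes "- b \<le> x"
  shows "ennreal \<eta> \<le> step_moment {b<..} 0 x"
proof -
  have "ennreal \<eta> = step_moment {b<..} 0 (- b)"
    using barrier_pos by (simp add: \<eta>_def step_moment_above l_nonneg)
  also have "\<dots> \<le> step_moment {b<..} 0 x"
    unfolding step_moment_def using assms
    by (intro nn_integral_mono ennreal_leI mult_left_mono) (auto split: split_indicator)
  finally show ?thesis .
qed

lemma step_moment_inside_le:
  assumes "- b \<le> x"
  shows "step_moment {-b..b} 0 x \<le> ennreal (1 - \<eta>)"
proof -
  have "step_moment {-b..b} 0 x + ennreal \<eta> \<le> step_moment {b<..} 0 x + step_moment {..< -b} 0 x + step_moment {-b..b} 0 x"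
    using \<eta>_le_step_moment_above[OF assms] by (simp add: add.commute add_increasing2 add_mono)
  also have "\<dots> = 1"
    using step_moment_total[of 0 x] by simp
  finally show ?thesis
    using \<eta>_pos by (cases "step_moment {-b..b} 0 x") (auto simp: top_unique simp flip: ennreal_plus)
qed

end

section \<open>The walk killed at the barriers\<close>

locale gaussian_walk = drift_barriers \<mu> b + prob_space M
  for \<mu> b :: real and M :: "'a measure" +
  fixes Z :: "nat \<Rightarrow> 'a \<Rightarrow> real"
  assumes indep_Z: "indep_vars (\<lambda>_. borel) Z UNIV"
    and distributed_Z: "\<And>i. distributed M lborel (Z i) (normal_density \<mu> 1)"
begin

abbreviation S :: "nat \<Rightarrow> 'a \<Rightarrow> real" where
  "S \<equiv> partial_sum Z"

definition alive :: "nat \<Rightarrow> 'a \<Rightarrow> real" where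
  "alive k \<omega> = (if \<forall>j\<in>{1..k}. \<bar>S j \<omega>\<bar> \<le> b then 1 else 0)"

definition expect_alive :: "nat \<Rightarrow> (real \<Rightarrow> ennreal) \<Rightarrow> ennreal" where
  "expect_alive k h = (\<integral>\<^sup>+\<omega>. ennreal (alive k \<omega>) * h (S k \<omega>) \<partial>M)"

lemma measurable_Z[measurable]: "Z i \<in> borel_measurable M"
  using distributed_measurable[OF distributed_Z[of i]] by simp

lemma measurable_S[measurable]: "S k \<in> borel_measurable M"
  unfolding partial_sum_def[abs_def] by measurable

lemma measurable_alive[measurable]: "alive k \<in> borel_measurable M"
  unfolding alive_def[abs_def] by measurable

lemma alive_0: "alive 0 \<omega> = 1"
  by (simp add: alive_def)

lemma alive_Suc: "alive (Suc k) \<omega> = alive k \<omega> * indicator {-b..b} (S (Suc k) \<omega>)"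
  by (auto simp: alive_def atLeastAtMostSuc_conv abs_le_iff split: split_indicator)

lemma abs_S_le_if_alive:
  assumes "alive k \<omega> \<noteq> 0"
  shows "\<bar>S k \<omega>\<bar> \<le> b"
proof (cases "k = 0")
  case True
  then show ?thesis
    using barrier_pos by (simp add: partial_sum_def)
next
  case False
  then show ?thesis
    using assms by (auto simp: alive_def split: if_splits)
qed

lemma nn_integral_alive_next:
  assumes [measurable]: "h \<in> borel_measurable borel"
  shows "(\<integral>\<^sup>+\<omega>. ennreal (alive k \<omega>) * h (S (Suc k) \<omega>) \<partial>M)
           = expect_alive k (\<lambda>x. \<integral>\<^sup>+z. ennreal (\<phi> z) * h (x + z) \<partial>lborel)"
proof -
  define past :: "(nat \<Rightarrow> real) \<Rightarrow> real" where
    "past v = (if \<forall>j\<in>{1..k}. \<bar>\<Sum>i<j. v i\<bar> \<le> b then 1 else 0)" for v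
  define G where "G v u = ennreal (past v) * h ((\<Sum>i<k. v i) + u k)" for v u :: "nat \<Rightarrow> real"
  have past: "past (\<lambda>i\<in>{..<k}. Z i \<omega>) = alive k \<omega>" for \<omega>
  proof -
    have "(\<Sum>i<j. (\<lambda>i\<in>{..<k}. Z i \<omega>) i) = S j \<omega>" if "j \<le> k" for j
      using that by (auto simp: partial_sum_def intro!: sum.cong)
    then show ?thesis
      by (auto simp: past_def alive_def)
  qed
  have "indep_var (PiM {..<k} (\<lambda>_. borel)) (\<lambda>\<omega>. \<lambda>i\<in>{..<k}. Z i \<omega>) (PiM {k} (\<lambda>_. borel)) (\<lambda>\<omega>. \<lambda>i\<in>{k}. Z i \<omega>)"
    by (rule indep_var_restrict[OF indep_Z]) auto
  moreover have "case_prod G \<in> borel_measurable (PiM {..<k} (\<lambda>_. borel) \<Otimes>\<^sub>M PiM {k} (\<lambda>_. borel))"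
    using measurable_component_PiM[measurable] unfolding G_def past_def by measurable
  ultimately have "(\<integral>\<^sup>+\<omega>. G (\<lambda>i\<in>{..<k}. Z i \<omega>) (\<lambda>i\<in>{k}. Z i \<omega>) \<partial>M)
      = (\<integral>\<^sup>+\<omega>. \<integral>\<^sup>+\<omega>'. G (\<lambda>i\<in>{..<k}. Z i \<omega>) (\<lambda>i\<in>{k}. Z i \<omega>') \<partial>M \<partial>M)"
    by (rule nn_integral_indep_var)
  then have "(\<integral>\<^sup>+\<omega>. ennreal (alive k \<omega>) * h (S (Suc k) \<omega>) \<partial>M)
      = (\<integral>\<^sup>+\<omega>. ennreal (alive k \<omega>) * (\<integral>\<^sup>+\<omega>'. h (S k \<omega> + Z k \<omega>') \<partial>M) \<partial>M)"
    by (simp add: G_def past partial_sum_def nn_integral_cmult)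
  also have "\<dots> = expect_alive k (\<lambda>x. \<integral>\<^sup>+z. ennreal (\<phi> z) * h (x + z) \<partial>lborel)"
  proof -
    have "(\<integral>\<^sup>+\<omega>'. h (x + Z k \<omega>') \<partial>M) = (\<integral>\<^sup>+z. h (x + z) \<partial>distr M lborel (Z k))" for x
      by (simp add: nn_integral_distr)
    also have "(\<integral>\<^sup>+z. h (x + z) \<partial>distr M lborel (Z k)) = (\<integral>\<^sup>+z. ennreal (\<phi> z) * h (x + z) \<partial>lborel)" for x
      by (simp add: distributed_distr_eq_density[OF distributed_Z] nn_integral_density)
    finally show ?thesis
      by (simp add: expect_alive_def)
  qed
  finally show ?thesis .
qed

lemma expect_alive_0: "expect_alive 0 h = h 0"
  by (simp add: expect_alive_def alive_0 partial_sum_def emeasure_space_1)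

lemma expect_alive_mono:
  assumes "\<And>x. \<bar>x\<bar> \<le> b \<Longrightarrow> h1 x \<le> h2 x"
  shows "expect_alive k h1 \<le> expect_alive k h2"
  unfolding expect_alive_def
proof (intro nn_integral_mono)
  fix \<omega>
  show "ennreal (alive k \<omega>) * h1 (S k \<omega>) \<le> ennreal (alive k \<omega>) * h2 (S k \<omega>)"
    using assms[OF abs_S_le_if_alive, of k \<omega>] by (cases "alive k \<omega> = 0") (auto intro: mult_left_mono)
qed

lemma expect_alive_cmult:
  "h \<in> borel_measurable borel \<Longrightarrow> expect_alive k (\<lambda>x. c * h x) = c * expect_alive k h"
  unfolding expect_alive_def by (simp add: nn_integral_cmult[symmetric] ac_simps)

lemma expect_alive_add:
  "h1 \<in> borel_measurable borel \<Longrightarrow> h2 \<in> borel_measurable borel \<Longrightarrow>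
    expect_alive k (\<lambda>x. h1 x + h2 x) = expect_alive k h1 + expect_alive k h2"
  unfolding expect_alive_def by (simp add: distrib_left nn_integral_add)

lemma expect_alive_step_moment:
  assumes [measurable]: "A \<in> sets borel"
  shows "expect_alive k (step_moment A a)
           = (\<integral>\<^sup>+\<omega>. ennreal (alive k \<omega>) * ennreal (indicator A (S (Suc k) \<omega>) * exp (- a * S (Suc k) \<omega>)) \<partial>M)"
  using nn_integral_alive_next[of "\<lambda>y. ennreal (indicator A y * exp (- a * y))" k]
  by (simp add: step_moment_def[abs_def] ennreal_mult')

lemma expect_alive_step_moment_inside:
  "expect_alive k (step_moment {-b..b} a) = expect_alive (Suc k) (\<lambda>x. ennreal (exp (- a * x)))"
proof -
  have "expect_alive k (step_moment {-b..b} a)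
      = (\<integral>\<^sup>+\<omega>. ennreal (alive k \<omega>) * ennreal (indicator {-b..b} (S (Suc k) \<omega>) * exp (- a * S (Suc k) \<omega>)) \<partial>M)"
    by (rule expect_alive_step_moment) simp
  also have "\<dots> = expect_alive (Suc k) (\<lambda>x. ennreal (exp (- a * x)))"
    unfolding expect_alive_def alive_Suc
    by (intro nn_integral_cong) (auto simp: alive_def split: split_indicator)
  finally show ?thesis .
qed

lemma expect_alive_exp_le:
  "expect_alive k (\<lambda>x. ennreal (exp (- a * x))) \<le> ennreal (exp (\<bar>a\<bar> * b)) * expect_alive k (\<lambda>_. 1)"
proof -
  have "expect_alive k (\<lambda>x. ennreal (exp (- a * x))) \<le> expect_alive k (\<lambda>_. ennreal (exp (\<bar>a\<bar> * b)) * 1)"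
  proof (rule expect_alive_mono)
    fix x :: real
    assume "\<bar>x\<bar> \<le> b"
    then have "- a * x \<le> \<bar>a\<bar> * b"
      by (metis abs_ge_minus_self abs_ge_zero abs_mult minus_mult_left mult_left_mono order_trans)
    then show "ennreal (exp (- a * x)) \<le> ennreal (exp (\<bar>a\<bar> * b)) * 1"
      by (simp add: ennreal_leI)
  qed
  also have "\<dots> = ennreal (exp (\<bar>a\<bar> * b)) * expect_alive k (\<lambda>_. 1)"
    by (rule expect_alive_cmult) simp
  finally show ?thesis .
qed

lemma expect_alive_exp_finite: "expect_alive k (\<lambda>x. ennreal (exp (- a * x))) < \<top>"
proof -
  have "expect_alive k (\<lambda>_. 1) \<le> (\<integral>\<^sup>+\<omega>. 1 \<partial>M)"
    unfolding expect_alive_def by (intro nn_integral_mono) (simp add: alive_def)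
  also have "\<dots> < \<top>"
    by (simp add: emeasure_space_1)
  finally have "expect_alive k (\<lambda>_. 1) < \<top>" .
  then show ?thesis
    using expect_alive_exp_le[of k a] by (simp add: ennreal_mult_less_top le_less_trans)
qed

(* exit_above a k = E[exp(-a S_tau); tau = k + 1, S_tau > b] and survival a k = E[exp(-a S_k); tau > k] *)
definition exit_above :: "real \<Rightarrow> nat \<Rightarrow> real" where
  "exit_above a k = enn2real (expect_alive k (step_moment {b<..} a))"

definition exit_below :: "real \<Rightarrow> nat \<Rightarrow> real" where
  "exit_below a k = enn2real (expect_alive k (step_moment {..< -b} a))"

definition survival :: "real \<Rightarrow> nat \<Rightarrow> real" where
  "survival a k = enn2real (expect_alive k (\<lambda>x. ennreal (exp (- a * x))))"

lemma exit_above_nonneg: "0 \<le> exit_above a k"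
  by (simp add: exit_above_def)

lemma exit_below_nonneg: "0 \<le> exit_below a k"
  by (simp add: exit_below_def)

lemma survival_nonneg: "0 \<le> survival a k"
  by (simp add: survival_def)

lemma expect_alive_step_moment_finite: "expect_alive k (step_moment A a) < \<top>"
proof -
  have "expect_alive k (step_moment A a) \<le> ennreal (exp (a\<^sup>2 / 2 - a * \<mu>)) * expect_alive k (\<lambda>x. ennreal (exp (- a * x)))"
    by (subst expect_alive_cmult[symmetric])
       (auto intro!: expect_alive_mono order_trans[OF step_moment_le] simp: ennreal_mult)
  also have "\<dots> < \<top>"
    using expect_alive_exp_finite by (simp add: ennreal_mult_less_top)
  finally show ?thesis .
qed

lemma ennreal_exit_above: "ennreal (exit_above a k) = expect_alive k (step_moment {b<..} a)"
  using expect_alive_step_moment_finite by (simp add: exit_above_def)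

lemma ennreal_exit_below: "ennreal (exit_below a k) = expect_alive k (step_moment {..< -b} a)"
  using expect_alive_step_moment_finite by (simp add: exit_below_def)

lemma ennreal_survival: "ennreal (survival a k) = expect_alive k (\<lambda>x. ennreal (exp (- a * x)))"
  using expect_alive_exp_finite by (simp add: survival_def)

lemma exit_survival_step:
  "exit_above a k + exit_below a k + survival a (Suc k) = exp (a\<^sup>2 / 2 - a * \<mu>) * survival a k"
proof -
  have "ennreal (exit_above a k + exit_below a k + survival a (Suc k))
      = ennreal (exit_above a k) + ennreal (exit_below a k) + ennreal (survival a (Suc k))"
    by (simp add: exit_above_nonneg exit_below_nonneg survival_nonneg)
  also have "\<dots> = expect_alive k (\<lambda>x. step_moment {b<..} a x + step_moment {..< -b} a x + step_moment {-b..b} a x)"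
    by (simp add: ennreal_exit_above ennreal_exit_below ennreal_survival expect_alive_add
        expect_alive_step_moment_inside)
  also have "\<dots> = ennreal (exp (a\<^sup>2 / 2 - a * \<mu>) * survival a k)"
    by (simp add: step_moment_total ennreal_mult survival_nonneg ennreal_survival expect_alive_cmult)
  finally show ?thesis
    using exit_above_nonneg exit_below_nonneg survival_nonneg by (subst (asm) ennreal_inj) auto
qed

lemma survival_0: "survival a 0 = 1"
  by (simp add: survival_def expect_alive_0)

lemma survival_decay: "survival 0 (Suc k) \<le> (1 - \<eta>) * survival 0 k"
proof -
  have "expect_alive (Suc k) (\<lambda>_. 1) = expect_alive k (step_moment {-b..b} 0)"
    using expect_alive_step_moment_inside[of k 0] by simp
  also have "\<dots> \<le> expect_alive k (\<lambda>_. ennreal (1 - \<eta>) * 1)"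
    by (rule expect_alive_mono) (simp add: step_moment_inside_le)
  also have "\<dots> = ennreal (1 - \<eta>) * expect_alive k (\<lambda>_. 1)"
    by (rule expect_alive_cmult) simp
  finally have "expect_alive (Suc k) (\<lambda>_. 1) \<le> ennreal (1 - \<eta>) * expect_alive k (\<lambda>_. 1)" .
  then show ?thesis
    using \<eta>_le_1 expect_alive_exp_finite[of k 0] unfolding survival_def
    by (simp add: enn2real_le_mult)
qed

lemma survival_le_geometric: "survival 0 n \<le> (1 - \<eta>) ^ n"
proof (induction n)
  case 0
  then show ?case
    by (simp add: survival_0)
next
  case (Suc n)
  have "survival 0 (Suc n) \<le> (1 - \<eta>) * survival 0 n"
    by (rule survival_decay)
  also have "\<dots> \<le> (1 - \<eta>) * (1 - \<eta>) ^ n"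
    using Suc \<eta>_le_1 by (intro mult_left_mono) auto
  finally show ?case
    by simp
qed

lemma survival_le_survival_0: "survival a k \<le> exp (\<bar>a\<bar> * b) * survival 0 k"
  unfolding survival_def
  using expect_alive_exp_le[of k a] expect_alive_exp_finite[of k 0]
  by (simp add: enn2real_le_mult)

lemma survival_tendsto_0: "survival a \<longlonglongrightarrow> 0"
proof (rule tendsto_sandwich[of "\<lambda>_. 0" _ _ "\<lambda>n. exp (\<bar>a\<bar> * b) * (1 - \<eta>) ^ n"])
  show "\<forall>\<^sub>F n in sequentially. survival a n \<le> exp (\<bar>a\<bar> * b) * (1 - \<eta>) ^ n"
    by (intro always_eventually allI order_trans[OF survival_le_survival_0] mult_left_mono
        survival_le_geometric) simp
  show "(\<lambda>n. exp (\<bar>a\<bar> * b) * (1 - \<eta>) ^ n) \<longlonglongrightarrow> 0"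
    using \<eta>_pos \<eta>_le_1 by (intro tendsto_mult_right_zero LIMSEQ_power_zero) auto
qed (auto simp: survival_nonneg)

(* For a = 2 mu this is Wald's identity E exp(-2 mu S_tau) = 1. *)
lemma exit_sums:
  assumes "a = 0 \<or> a = 2 * \<mu>"
  shows "(\<lambda>k. exit_above a k + exit_below a k) sums 1"
proof -
  have step: "exit_above a k + exit_below a k = survival a k - survival a (Suc k)" for k
    using exit_survival_step[of a k] assms by (auto simp: power2_eq_square)
  have "(\<lambda>n. \<Sum>k<n. exit_above a k + exit_below a k) = (\<lambda>n. 1 - survival a n)"
    by (simp add: step sum_lessThan_telescope' survival_0)
  then show ?thesis
    unfolding sums_def using tendsto_diff[OF tendsto_const survival_tendsto_0, of 1 a] by simp
qed

lemma exit_above_ge: "\<rho> * exp (- (2 * \<mu>) * b) * exit_above 0 k \<le> exit_above (2 * \<mu>) k"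
proof -
  have "ennreal (\<rho> * exp (- (2 * \<mu>) * b)) * expect_alive k (step_moment {b<..} 0)
      = expect_alive k (\<lambda>x. ennreal (\<rho> * exp (- (2 * \<mu>) * b)) * step_moment {b<..} 0 x)"
    by (rule expect_alive_cmult[symmetric]) simp
  also have "\<dots> \<le> expect_alive k (step_moment {b<..} (2 * \<mu>))"
    by (rule expect_alive_mono, rule step_moment_above_ge) (simp add: abs_le_iff)
  finally show ?thesis
    unfolding exit_above_def
    by (rule mult_le_enn2real) (use expect_alive_step_moment_finite \<rho>_pos in auto)
qed

lemma exit_above_le: "exit_above (2 * \<mu>) k \<le> exp (- (2 * \<mu>) * b) * exit_above 0 k"
proof -
  have "expect_alive k (step_moment {b<..} (2 * \<mu>))
      \<le> expect_alive k (\<lambda>x. ennreal (exp (- (2 * \<mu>) * b)) * step_moment {b<..} 0 x)"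
    by (rule expect_alive_mono, rule less_imp_le, rule step_moment_above_less) (simp add: abs_le_iff)
  also have "\<dots> = ennreal (exp (- (2 * \<mu>) * b)) * expect_alive k (step_moment {b<..} 0)"
    by (rule expect_alive_cmult) simp
  finally show ?thesis
    unfolding exit_above_def
    by (rule enn2real_le_mult) (use expect_alive_step_moment_finite in auto)
qed

lemma exit_above_less_0: "exit_above (2 * \<mu>) 0 < exp (- (2 * \<mu>) * b) * exit_above 0 0"
  unfolding exit_above_def expect_alive_0
  by (rule enn2real_less_mult) (use step_moment_above_less[of 0] barrier_pos step_moment_finite in auto)

lemma exit_below_ge: "exp ((2 * \<mu>) * b) * exit_below 0 k \<le> exit_below (2 * \<mu>) k"
proof -
  have "ennreal (exp ((2 * \<mu>) * b)) * expect_alive k (step_moment {..< -b} 0)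
      = expect_alive k (\<lambda>x. ennreal (exp ((2 * \<mu>) * b)) * step_moment {..< -b} 0 x)"
    by (rule expect_alive_cmult[symmetric]) simp
  also have "\<dots> \<le> expect_alive k (step_moment {..< -b} (2 * \<mu>))"
    by (rule expect_alive_mono, rule less_imp_le, rule step_moment_below_greater) (simp add: abs_le_iff)
  finally show ?thesis
    unfolding exit_below_def
    by (rule mult_le_enn2real) (use expect_alive_step_moment_finite in auto)
qed

lemma exit_below_greater_0: "exp ((2 * \<mu>) * b) * exit_below 0 0 < exit_below (2 * \<mu>) 0"
  unfolding exit_below_def expect_alive_0
  by (rule mult_less_enn2real) (use step_moment_below_greater[of 0] barrier_pos step_moment_finite in auto)

lemma exit_below_le: "exit_below (2 * \<mu>) k \<le> exp ((2 * \<mu>) * b) / \<rho> * exit_below 0 k"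
proof -
  have "expect_alive k (step_moment {..< -b} (2 * \<mu>))
      \<le> expect_alive k (\<lambda>x. ennreal (exp ((2 * \<mu>) * b) / \<rho>) * step_moment {..< -b} 0 x)"
    by (rule expect_alive_mono, rule step_moment_below_le) (simp add: abs_le_iff)
  also have "\<dots> = ennreal (exp ((2 * \<mu>) * b) / \<rho>) * expect_alive k (step_moment {..< -b} 0)"
    by (rule expect_alive_cmult) simp
  finally show ?thesis
    unfolding exit_below_def
    by (rule enn2real_le_mult) (use expect_alive_step_moment_finite \<rho>_pos in auto)
qed

definition exits_above_at :: "nat \<Rightarrow> 'a set" where
  "exits_above_at k = {\<omega> \<in> space M. alive k \<omega> = 1 \<and> b < S (Suc k) \<omega>}"

lemma sets_exits_above_at[measurable]: "exits_above_at k \<in> sets M"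
  unfolding exits_above_at_def by measurable

lemma measure_exits_above_at: "measure M (exits_above_at k) = exit_above 0 k"
proof -
  have "emeasure M (exits_above_at k) = (\<integral>\<^sup>+\<omega>. indicator (exits_above_at k) \<omega> \<partial>M)"
    by simp
  also have "\<dots> = (\<integral>\<^sup>+\<omega>. ennreal (alive k \<omega>) * ennreal (indicator {b<..} (S (Suc k) \<omega>) * exp (- 0 * S (Suc k) \<omega>)) \<partial>M)"
    by (intro nn_integral_cong) (auto simp: exits_above_at_def alive_def split: split_indicator)
  also have "\<dots> = expect_alive k (step_moment {b<..} 0)"
    by (rule expect_alive_step_moment[symmetric]) simp
  finally show ?thesis
    by (simp add: measure_def exit_above_def)
qed

lemma exit_time_eq_Suc:
  assumes "alive k \<omega> = 1" "S (Suc k) \<omega> < - b \<or> b < S (Suc k) \<omega>"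
  shows "exit_time Z b \<omega> = Suc k"
  unfolding exit_time_def
proof (rule Least_equality)
  fix m
  assume m: "1 \<le> m \<and> (S m \<omega> < - b \<or> b < S m \<omega>)"
  show "Suc k \<le> m"
  proof (rule ccontr)
    assume "\<not> Suc k \<le> m"
    with m have "m \<in> {1..k}"
      by simp
    with assms(1) have "\<bar>S m \<omega>\<bar> \<le> b"
      by (auto simp: alive_def split: if_splits)
    with m show False
      by auto
  qed
qed (use assms in simp)

lemma exit_at_exit_time:
  assumes "\<exists>m\<ge>1. S m \<omega> < - b \<or> b < S m \<omega>"
  obtains k where "exit_time Z b \<omega> = Suc k" "alive k \<omega> = 1"
proof -
  let ?P = "\<lambda>m. 1 \<le> m \<and> (S m \<omega> < - b \<or> b < S m \<omega>)"
  have "?P (exit_time Z b \<omega>)"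
    unfolding exit_time_def using assms by (rule LeastI_ex[where P="?P"]; blast)
  then obtain k where k: "exit_time Z b \<omega> = Suc k"
    using not0_implies_Suc by force
  have not_exit: "\<not> ?P j" if "j < Suc k" for j
    using not_less_Least[where P="?P", of j] that k unfolding exit_time_def by simp
  have "\<bar>S j \<omega>\<bar> \<le> b" if "j \<in> {1..k}" for j
    using that not_exit[of j] by (auto simp: abs_le_iff)
  then have "alive k \<omega> = 1"
    by (simp add: alive_def)
  with k show ?thesis
    using that by blast
qed

lemma upper_exit_event_eq: "upper_exit_event M Z b = (\<Union>k. exits_above_at k)"
proof (intro set_eqI iffI)
  fix \<omega>
  assume \<omega>: "\<omega> \<in> upper_exit_event M Z b"
  then have "\<exists>m\<ge>1. S m \<omega> < - b \<or> b < S m \<omega>"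
    by (simp add: upper_exit_event_def)
  then obtain k where "exit_time Z b \<omega> = Suc k" "alive k \<omega> = 1"
    by (rule exit_at_exit_time)
  with \<omega> show "\<omega> \<in> (\<Union>k. exits_above_at k)"
    by (auto simp: upper_exit_event_def exits_above_at_def)
next
  fix \<omega>
  assume "\<omega> \<in> (\<Union>k. exits_above_at k)"
  then obtain k where "\<omega> \<in> space M" "alive k \<omega> = 1" "b < S (Suc k) \<omega>"
    by (auto simp: exits_above_at_def)
  then show "\<omega> \<in> upper_exit_event M Z b"
    using exit_time_eq_Suc[of k \<omega>] by (auto simp: upper_exit_event_def)
qed

lemma measure_upper_exit_event: "measure M (upper_exit_event M Z b) = (\<Sum>k. exit_above 0 k)"
proof -
  have "Suc m = Suc n" if "\<omega> \<in> exits_above_at m" "\<omega> \<in> exits_above_at n" for \<omega> m n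
    using that exit_time_eq_Suc[of m \<omega>] exit_time_eq_Suc[of n \<omega>] by (simp add: exits_above_at_def)
  then have "exits_above_at m \<inter> exits_above_at n = {}" if "m \<noteq> n" for m n
    using that by blast
  then have "disjoint_family exits_above_at"
    by (simp add: disjoint_family_on_def)
  then have "(\<lambda>k. measure M (exits_above_at k)) sums measure M (\<Union>k. exits_above_at k)"
    by (intro measure_UNION) (auto simp: emeasure_finite)
  then show ?thesis
    by (simp add: upper_exit_event_eq measure_exits_above_at sums_iff)
qed

lemma upper_exit_probability_bounds:
  defines "E \<equiv> exp ((2 * \<mu>) * b)" and "e \<equiv> exp (- (2 * \<mu>) * b)"
  shows "(E - 1) / (E - \<rho> * e) < measure M (upper_exit_event M Z b)
       \<and> measure M (upper_exit_event M Z b) < (E / \<rho> - 1) / (E / \<rho> - e)"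
proof -
  have "e < 1" "1 < E"
    using drift_pos barrier_pos by (simp_all add: E_def e_def)
  moreover have "\<rho> * e < 1 * 1"
    using \<rho>_pos \<rho>_less_1 \<open>e < 1\<close> by (intro mult_strict_mono) (auto simp: e_def)
  ultimately have "\<rho> * e < E" "e < E / \<rho>"
    using \<rho>_pos by (simp_all add: less_divide_eq mult.commute)
  show ?thesis
    unfolding measure_upper_exit_event E_def e_def
    by (rule suminf_bounds_from_two_partitions[OF exit_sums exit_sums])
       (use exit_above_nonneg exit_below_nonneg exit_above_ge exit_above_le exit_above_less_0
            exit_below_ge exit_below_greater_0 exit_below_le
            \<open>\<rho> * e < E\<close> \<open>e < E / \<rho>\<close> in \<open>simp_all add: E_def e_def\<close>)
qed

end

theorem proposition2:
  fixes M :: "'a measure" and Z :: "nat \<Rightarrow> 'a \<Rightarrow> real" and \<mu> b :: real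
  assumes "prob_space M"
    and "\<mu> > 0" and "b > 0"
    and "prob_space.indep_vars M (\<lambda>_. borel) Z UNIV"
    and "\<And>i. distributed M lborel (Z i) (normal_density \<mu> 1)"
  shows "(exp (2*\<mu>*b) - 1) / (exp (2*\<mu>*b) - R_ratio (-\<mu>) * exp (-2*\<mu>*b))
           < measure M (upper_exit_event M Z b)
       \<and> measure M (upper_exit_event M Z b)
           < (exp (2*\<mu>*b) * R_ratio \<mu> - 1) / (exp (2*\<mu>*b) * R_ratio \<mu> - exp (-2*\<mu>*b))"
proof -
  interpret gaussian_walk \<mu> b M Z
    using assms by (simp add: gaussian_walk_def gaussian_walk_axioms_def drift_barriers_def)
  show ?thesis
    using upper_exit_probability_bounds by (simp add: R_ratio_minus_drift R_ratio_drift)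
qed

end
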